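(* Let $(X,d)$ be a metric space, $x_0\in X$, $n\geq 1$. For all $a,b\in\pi_n(X,x_0)$, $\rho(a,b)=\rho(a^{-1},b^{-1})$.
   Context: $\Omega^n(X,x_0)$ is the set of continuous maps $\alpha:[0,1]^n\to X$ with $\alpha(\partial[0,1]^n)=\{x_0\}$, with uniform metric $\mu(\alpha,\beta)=\sup_{t\in[0,1]^n}d(\alpha(t),\beta(t))$. For $a,b\in\pi_n(X,x_0)$, $\rho(a,b)=\inf\{\mu(\alpha,\beta)\mid\alpha\in a,\beta\in b\}$. *)

theory Defs
  imports "HOL-Analysis.Analysis"
begin

definition unit_cube :: "(real ^ 'n) set" where
  "unit_cube = cbox 0 One"

definition cube_boundary :: "(real ^ 'n) set" where
  "cube_boundary = unit_cube - box 0 One"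

text \<open>Omega^n(X,x0) for X the whole metric space of type 'a.\<close>
definition Omega :: "'a::metric_space \<Rightarrow> ((real ^ 'n) \<Rightarrow> 'a) set" where
  "Omega x0 = {\<alpha>. continuous_on unit_cube \<alpha> \<and> \<alpha> ` cube_boundary \<subseteq> {x0}}"

definition rel_homotopic :: "'a::metric_space \<Rightarrow> ((real ^ 'n) \<Rightarrow> 'a) \<Rightarrow> ((real ^ 'n) \<Rightarrow> 'a) \<Rightarrow> bool" where
  "rel_homotopic x0 \<alpha> \<beta> =
     homotopic_with_canon (\<lambda>f. f ` cube_boundary \<subseteq> {x0}) unit_cube UNIV \<alpha> \<beta>"

definition pi_n :: "'a::metric_space \<Rightarrow> ((real ^ 'n) \<Rightarrow> 'a) set set" where
  "pi_n x0 = (\<lambda>\<alpha>. {\<beta> \<in> Omega x0. rel_homotopic x0 \<alpha> \<beta>}) ` Omega x0"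

text \<open>Inverse: reverse a fixed coordinate of the cube.\<close>
definition flip_coord :: "real ^ 'n \<Rightarrow> real ^ 'n" where
  "flip_coord t = (\<chi> i. if i = (SOME j. True) then 1 - t $ i else t $ i)"

definition class_inv :: "((real ^ 'n) \<Rightarrow> 'a) set \<Rightarrow> ((real ^ 'n) \<Rightarrow> 'a) set" where
  "class_inv a = (\<lambda>\<alpha>. \<alpha> \<circ> flip_coord) ` a"

definition mu :: "((real ^ 'n) \<Rightarrow> 'a::metric_space) \<Rightarrow> ((real ^ 'n) \<Rightarrow> 'a) \<Rightarrow> real" where
  "mu \<alpha> \<beta> = (SUP t\<in>unit_cube. dist (\<alpha> t) (\<beta> t))"

definition rho :: "((real ^ 'n) \<Rightarrow> 'a::metric_space) set \<Rightarrow> ((real ^ 'n) \<Rightarrow> 'a) set \<Rightarrow> real" where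
  "rho a b = Inf {mu \<alpha> \<beta> | \<alpha> \<beta>. \<alpha> \<in> a \<and> \<beta> \<in> b}"

end

theory Submission
  imports Defs
begin

text \<open>Reversing one coordinate is an involution of the unit cube, and the uniform distance
  is a supremum over the cube, so precomposing both maps with it leaves \<open>mu\<close> unchanged;
  hence the sets of distances over which \<open>rho\<close> takes its infimum coincide.\<close>

lemma flip_coord_flip_coord [simp]: "flip_coord (flip_coord t) = t"
  unfolding flip_coord_def by (simp add: vec_eq_iff)

lemma mem_unit_cube_iff: "t \<in> unit_cube \<longleftrightarrow> (\<forall>i. 0 \<le> t $ i \<and> t $ i \<le> 1)"
proof -
  have One_index: "(One :: real ^ 'n) $ i = 1" for i
    by (metis Cart_1 one_index)
  show ?thesis
    unfolding unit_cube_def mem_box_cart by (simp only: One_index zero_index)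
qed

lemma flip_coord_in_unit_cube: "t \<in> unit_cube \<Longrightarrow> flip_coord t \<in> unit_cube"
  unfolding mem_unit_cube_iff flip_coord_def by auto

lemma flip_coord_image_unit_cube: "flip_coord ` unit_cube = unit_cube"
  by (metis flip_coord_flip_coord flip_coord_in_unit_cube image_eqI subsetI subset_antisym
      image_subsetI)

lemma mu_comp:
  assumes "f ` unit_cube = unit_cube"
  shows "mu (\<alpha> \<circ> f) (\<beta> \<circ> f) = mu \<alpha> \<beta>"
proof -
  have "mu (\<alpha> \<circ> f) (\<beta> \<circ> f) = (SUP t\<in>f ` unit_cube. dist (\<alpha> t) (\<beta> t))"
    unfolding mu_def by (simp add: image_image)
  then show ?thesis
    unfolding assms mu_def .
qed

lemma rho_comp:
  assumes "f ` unit_cube = unit_cube"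
  shows "rho ((\<lambda>\<alpha>. \<alpha> \<circ> f) ` a) ((\<lambda>\<beta>. \<beta> \<circ> f) ` b) = rho a b"
proof -
  have "{mu \<alpha> \<beta> | \<alpha> \<beta>. \<alpha> \<in> (\<lambda>\<alpha>. \<alpha> \<circ> f) ` a \<and> \<beta> \<in> (\<lambda>\<beta>. \<beta> \<circ> f) ` b}
      = {mu (\<alpha> \<circ> f) (\<beta> \<circ> f) | \<alpha> \<beta>. \<alpha> \<in> a \<and> \<beta> \<in> b}"
    by blast
  also have "\<dots> = {mu \<alpha> \<beta> | \<alpha> \<beta>. \<alpha> \<in> a \<and> \<beta> \<in> b}"
    by (simp add: mu_comp[OF assms])
  finally show ?thesis
    unfolding rho_def by simp
qed

lemma rho_class_inv: "rho (class_inv a) (class_inv b) = rho a b"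
  unfolding class_inv_def by (rule rho_comp[OF flip_coord_image_unit_cube])

theorem lemma4p2:
  fixes x0 :: "'a::metric_space"
    and a b :: "((real ^ 'n) \<Rightarrow> 'a) set"
  assumes "a \<in> pi_n x0" and "b \<in> pi_n x0"
  shows "rho a b = rho (class_inv a) (class_inv b)"
  by (simp add: rho_class_inv)

end
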